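(* Let $C\neq\{1\}$ be a finite cyclic group generated by $s$, let $\langle t\rangle\cong\mathbb{Z}$, and let $G=\langle a\rangle\wr(C\wr\langle t\rangle)$ with $\langle a\rangle\cong\mathbb{Z}$. Put $x=ts$, $y=t$ and $H=\langle x,y,[x,a]a,[y,a]a\rangle\le G$. Then $\mathrm{Dist}^G_H(n)\succeq 2^n$.
   Context: Wreath products: for groups $L,K$, $L\wr K=W\rtimes K$ with $W=\bigoplus_{K}L$. Elements are pairs $(f,k)$ with $f:K\to L$ finitely supported, $k\in K$, multiplication $(f,k)(\hat f,\hat k)=(f+\hat f^{k},k\hat k)$ with $\hat f^{k}(v)=\hat f(vk^{-1})$. $K$ is identified with $\{(0,k)\}$ and $L$ with the $e$-indexed summand of $W$. Convention: $[x,a]=x^{-1}a^{-1}xa$. Distortion: if $G$ has finite generating set $S$ and a subgroup $H$ has finite generating set $T$, $\mathrm{Dist}^G_H(n)=\max\{|g|_T : g\in H,\ |g|_S\le n\}$, with $|g|_S$ the word length on $S^{\pm1}$. $f\preceq g$ means there is $C>0$ with $f(n)\le Cg(Cn+C)+Cn+C$ for all $n$. $G$ is generated by $\{a,s,t\}$ and $H$ by the four listed elements. *)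

theory Defs
  imports Complex_Main "HOL-Algebra.Elementary_Groups" "HOL-Algebra.Generated_Groups"
begin

definition wreath :: "('l,'p) monoid_scheme \<Rightarrow> ('k,'q) monoid_scheme \<Rightarrow> (('k \<Rightarrow> 'l) \<times> 'k) monoid" where
  "wreath L K = \<lparr>carrier = {(f,k). k \<in> carrier K \<and> f \<in> extensional (carrier K)
                     \<and> f \<in> carrier K \<rightarrow> carrier L \<and> finite {v \<in> carrier K. f v \<noteq> \<one>\<^bsub>L\<^esub>}},
     mult = (\<lambda>(f,k) (g,l). ((\<lambda>v\<in>carrier K. f v \<otimes>\<^bsub>L\<^esub> g (v \<otimes>\<^bsub>K\<^esub> inv\<^bsub>K\<^esub> k)), k \<otimes>\<^bsub>K\<^esub> l)),
     one = ((\<lambda>v\<in>carrier K. \<one>\<^bsub>L\<^esub>), \<one>\<^bsub>K\<^esub>)\<rparr>"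

definition wr_top :: "('l,'p) monoid_scheme \<Rightarrow> ('k,'q) monoid_scheme \<Rightarrow> 'k \<Rightarrow> ('k \<Rightarrow> 'l) \<times> 'k" where
  "wr_top L K k = ((\<lambda>v\<in>carrier K. \<one>\<^bsub>L\<^esub>), k)"

definition wr_base :: "('l,'p) monoid_scheme \<Rightarrow> ('k,'q) monoid_scheme \<Rightarrow> 'l \<Rightarrow> ('k \<Rightarrow> 'l) \<times> 'k" where
  "wr_base L K x = ((\<lambda>v\<in>carrier K. if v = \<one>\<^bsub>K\<^esub> then x else \<one>\<^bsub>L\<^esub>), \<one>\<^bsub>K\<^esub>)"

definition commutator :: "('a,'b) monoid_scheme \<Rightarrow> 'a \<Rightarrow> 'a \<Rightarrow> 'a" where
  "commutator G x a = inv\<^bsub>G\<^esub> x \<otimes>\<^bsub>G\<^esub> inv\<^bsub>G\<^esub> a \<otimes>\<^bsub>G\<^esub> x \<otimes>\<^bsub>G\<^esub> a"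

definition word_prod :: "('a,'b) monoid_scheme \<Rightarrow> 'a list \<Rightarrow> 'a" where
  "word_prod G xs = foldr (\<lambda>x y. x \<otimes>\<^bsub>G\<^esub> y) xs \<one>\<^bsub>G\<^esub>"

definition word_length :: "('a,'b) monoid_scheme \<Rightarrow> 'a set \<Rightarrow> 'a \<Rightarrow> nat" where
  "word_length G S g = (LEAST n. \<exists>xs. length xs = n \<and> set xs \<subseteq> S \<union> m_inv G ` S \<and> word_prod G xs = g)"

definition distortion :: "('a,'b) monoid_scheme \<Rightarrow> 'a set \<Rightarrow> 'a set \<Rightarrow> nat \<Rightarrow> nat" where
  "distortion G S T n = Sup {word_length G T h | h. h \<in> generate G T \<and> word_length G S h \<le> n}"

definition dominated :: "(nat \<Rightarrow> real) \<Rightarrow> (nat \<Rightarrow> real) \<Rightarrow> bool" where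
  "dominated f g = (\<exists>C::nat. C > 0 \<and> (\<forall>n. f n \<le> real C * g (C * n + C) + real C * real n + real C))"

end

theory Submission
  imports Defs
begin

text \<open>
  Write \<open>K = C wr \<int>\<close>, so that \<open>G = \<int> wr K\<close>, and let \<open>x, y\<close> be the images of \<open>ts, t\<close>
  in \<open>K\<close>. The element of the base group (finitely supported maps \<open>K \<rightarrow> \<int>\<close>) with entry
  \<open>+1\<close> at \<open>y\<^sup>-\<^sup>n x\<^sup>-\<^sup>1\<close> and \<open>-1\<close> at \<open>y\<^sup>-\<^sup>n\<^sup>-\<^sup>1\<close> is a product of \<open>a\<close> and \<open>a\<^sup>-\<^sup>1\<close> conjugated
  by words of length at most \<open>n + 2\<close>, so its \<open>S\<close>-length is linear in \<open>n\<close>. For a lower bound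
  on its \<open>T\<close>-length, give \<open>k \<in> K\<close> the weight \<open>2\<^sup>-\<^sup>m\<close> when its cursor \<open>m\<close> is negative and its
  lamp at \<open>m + 1\<close> is \<open>s\<^sup>-\<^sup>1\<close>, and weight \<open>0\<close> otherwise. Pairing base elements with this
  weight gives \<open>2\<^sup>n\<^sup>+\<^sup>1\<close> for our element, while each letter of \<open>T\<^sup>\<plusminus>\<^sup>1\<close>, wherever it stands
  in a word, changes the pairing by at most \<open>2\<close>. Hence the \<open>T\<close>-length is at least \<open>2\<^sup>n\<close>.
\<close>

section \<open>Restricted wreath products\<close>

lemma wreath_carrier_iff:
  "(f,k) \<in> carrier (wreath L K) \<longleftrightarrow> k \<in> carrier K \<and> f \<in> extensional (carrier K)
     \<and> f \<in> carrier K \<rightarrow> carrier L \<and> finite {v \<in> carrier K. f v \<noteq> \<one>\<^bsub>L\<^esub>}"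
  by (simp add: wreath_def)

lemma wreath_mult:
  "(f,k) \<otimes>\<^bsub>wreath L K\<^esub> (g,l) = ((\<lambda>v\<in>carrier K. f v \<otimes>\<^bsub>L\<^esub> g (v \<otimes>\<^bsub>K\<^esub> inv\<^bsub>K\<^esub> k)), k \<otimes>\<^bsub>K\<^esub> l)"
  by (simp add: wreath_def)

lemma wreath_one: "\<one>\<^bsub>wreath L K\<^esub> = ((\<lambda>v\<in>carrier K. \<one>\<^bsub>L\<^esub>), \<one>\<^bsub>K\<^esub>)"
  by (simp add: wreath_def)

lemma (in group) finite_support_translate:
  assumes "k \<in> carrier G" and "finite {v \<in> carrier G. f v \<noteq> c}"
  shows "finite {v \<in> carrier G. f (v \<otimes> k) \<noteq> c}"
proof -
  have "{v \<in> carrier G. f (v \<otimes> k) \<noteq> c} \<subseteq> (\<lambda>u. u \<otimes> inv k) ` {v \<in> carrier G. f v \<noteq> c}"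
  proof
    fix v assume v: "v \<in> {v \<in> carrier G. f (v \<otimes> k) \<noteq> c}"
    then have "v = (v \<otimes> k) \<otimes> inv k" using assms(1) by (simp add: m_assoc)
    with v assms(1) show "v \<in> (\<lambda>u. u \<otimes> inv k) ` {v \<in> carrier G. f v \<noteq> c}" by blast
  qed
  then show ?thesis using assms(2) by (rule finite_subset[OF _ finite_imageI])
qed

lemma wreath_m_closed:
  assumes L: "group L" and K: "group K"
    and "x \<in> carrier (wreath L K)" "y \<in> carrier (wreath L K)"
  shows "x \<otimes>\<^bsub>wreath L K\<^esub> y \<in> carrier (wreath L K)"
proof -
  interpret L: group L by (rule L)
  interpret K: group K by (rule K)
  obtain f k g l where xy: "x = (f,k)" "y = (g,l)" by fastforce
  have c: "k \<in> carrier K" "f \<in> carrier K \<rightarrow> carrier L" "finite {v \<in> carrier K. f v \<noteq> \<one>\<^bsub>L\<^esub>}"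
    "l \<in> carrier K" "g \<in> carrier K \<rightarrow> carrier L" "finite {v \<in> carrier K. g v \<noteq> \<one>\<^bsub>L\<^esub>}"
    using assms xy by (auto simp: wreath_carrier_iff)
  have "finite {v \<in> carrier K. g (v \<otimes>\<^bsub>K\<^esub> inv\<^bsub>K\<^esub> k) \<noteq> \<one>\<^bsub>L\<^esub>}"
    using c by (simp add: K.finite_support_translate)
  then have fin: "finite {v \<in> carrier K. f v \<otimes>\<^bsub>L\<^esub> g (v \<otimes>\<^bsub>K\<^esub> inv\<^bsub>K\<^esub> k) \<noteq> \<one>\<^bsub>L\<^esub>}"
    using c(3) by (rule rev_finite_subset[OF finite_UnI]) auto
  show ?thesis using c unfolding xy wreath_mult
    by (auto simp: wreath_carrier_iff Pi_def intro!: finite_subset[OF _ fin])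
qed

lemma wreath_inverse:
  assumes L: "group L" and K: "group K" and x: "(f,k) \<in> carrier (wreath L K)"
  defines "f' \<equiv> \<lambda>v\<in>carrier K. inv\<^bsub>L\<^esub> f (v \<otimes>\<^bsub>K\<^esub> k)"
  shows "(f', inv\<^bsub>K\<^esub> k) \<in> carrier (wreath L K)"
    and "(f', inv\<^bsub>K\<^esub> k) \<otimes>\<^bsub>wreath L K\<^esub> (f,k) = \<one>\<^bsub>wreath L K\<^esub>"
    and "(f,k) \<otimes>\<^bsub>wreath L K\<^esub> (f', inv\<^bsub>K\<^esub> k) = \<one>\<^bsub>wreath L K\<^esub>"
proof -
  interpret L: group L by (rule L)
  interpret K: group K by (rule K)
  have c: "k \<in> carrier K" "f \<in> carrier K \<rightarrow> carrier L" "finite {v \<in> carrier K. f v \<noteq> \<one>\<^bsub>L\<^esub>}"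
    using x by (auto simp: wreath_carrier_iff)
  have "finite {v \<in> carrier K. f (v \<otimes>\<^bsub>K\<^esub> k) \<noteq> \<one>\<^bsub>L\<^esub>}"
    using c by (simp add: K.finite_support_translate)
  then have "finite {v \<in> carrier K. f' v \<noteq> \<one>\<^bsub>L\<^esub>}"
    by (rule rev_finite_subset) (use c in \<open>auto simp: f'_def Pi_def\<close>)
  then show "(f', inv\<^bsub>K\<^esub> k) \<in> carrier (wreath L K)"
    using c by (auto simp: wreath_carrier_iff f'_def Pi_def)
  show "(f', inv\<^bsub>K\<^esub> k) \<otimes>\<^bsub>wreath L K\<^esub> (f,k) = \<one>\<^bsub>wreath L K\<^esub>"
    "(f,k) \<otimes>\<^bsub>wreath L K\<^esub> (f', inv\<^bsub>K\<^esub> k) = \<one>\<^bsub>wreath L K\<^esub>"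
    unfolding wreath_mult wreath_one using c
    by (auto simp: f'_def Pi_def K.m_assoc intro!: restrict_ext)
qed

lemma wreath_left_inverse_unique:
  assumes L: "group L" and K: "group K" and x: "(f,k) \<in> carrier (wreath L K)"
    and y: "y \<in> carrier (wreath L K)" "y \<otimes>\<^bsub>wreath L K\<^esub> (f,k) = \<one>\<^bsub>wreath L K\<^esub>"
  shows "y = ((\<lambda>v\<in>carrier K. inv\<^bsub>L\<^esub> f (v \<otimes>\<^bsub>K\<^esub> k)), inv\<^bsub>K\<^esub> k)"
proof -
  interpret L: group L by (rule L)
  interpret K: group K by (rule K)
  obtain h l where yy: "y = (h,l)" by fastforce
  have c: "k \<in> carrier K" "f \<in> carrier K \<rightarrow> carrier L"
    using x by (auto simp: wreath_carrier_iff)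
  have cy: "l \<in> carrier K" "h \<in> carrier K \<rightarrow> carrier L" "h \<in> extensional (carrier K)"
    using y yy by (auto simp: wreath_carrier_iff)
  have top: "l \<otimes>\<^bsub>K\<^esub> k = \<one>\<^bsub>K\<^esub>"
    and base: "\<And>v. v \<in> carrier K \<Longrightarrow> h v \<otimes>\<^bsub>L\<^esub> f (v \<otimes>\<^bsub>K\<^esub> inv\<^bsub>K\<^esub> l) = \<one>\<^bsub>L\<^esub>"
    using y(2) unfolding yy wreath_mult wreath_one
    by (auto dest: fun_cong[where x=v for v] split: if_splits)
  have l: "l = inv\<^bsub>K\<^esub> k" using top c cy K.inv_equality by auto
  have "h = (\<lambda>v\<in>carrier K. inv\<^bsub>L\<^esub> f (v \<otimes>\<^bsub>K\<^esub> k))"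
  proof (rule extensionalityI[OF cy(3)])
    fix v assume v: "v \<in> carrier K"
    have "h v \<otimes>\<^bsub>L\<^esub> f (v \<otimes>\<^bsub>K\<^esub> k) = \<one>\<^bsub>L\<^esub>" using base[OF v] c l by simp
    then show "h v = (\<lambda>v\<in>carrier K. inv\<^bsub>L\<^esub> f (v \<otimes>\<^bsub>K\<^esub> k)) v"
      using v c cy L.inv_equality by (auto simp: Pi_def)
  qed simp
  then show ?thesis using yy l by simp
qed

lemma wreath_inv:
  assumes L: "group L" and K: "group K" and x: "(f,k) \<in> carrier (wreath L K)"
  shows "inv\<^bsub>wreath L K\<^esub> (f,k) = ((\<lambda>v\<in>carrier K. inv\<^bsub>L\<^esub> f (v \<otimes>\<^bsub>K\<^esub> k)), inv\<^bsub>K\<^esub> k)"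
proof -
  note inverse = wreath_inverse[OF assms]
  show ?thesis unfolding m_inv_def[of "wreath L K"]
    by (rule the_equality) (use inverse in blast, use wreath_left_inverse_unique[OF assms] in blast)
qed

lemma wreath_inv_closed:
  assumes L: "group L" and K: "group K" and x: "x \<in> carrier (wreath L K)"
  shows "inv\<^bsub>wreath L K\<^esub> x \<in> carrier (wreath L K)"
proof -
  obtain f k where "x = (f,k)" by fastforce
  then show ?thesis using wreath_inv[OF L K] wreath_inverse(1)[OF L K] x by simp
qed

lemma wreath_group:
  assumes L: "group L" and K: "comm_group K"
  shows "group (wreath L K)"
proof (rule groupI)
  interpret L: group L by (rule L)
  interpret K: comm_group K by (rule K)
  show "\<one>\<^bsub>wreath L K\<^esub> \<in> carrier (wreath L K)"
    by (simp add: wreath_def)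
  show "x \<otimes>\<^bsub>wreath L K\<^esub> y \<in> carrier (wreath L K)"
    if "x \<in> carrier (wreath L K)" "y \<in> carrier (wreath L K)" for x y
    using wreath_m_closed[OF L K.is_group that] .
  show "x \<otimes>\<^bsub>wreath L K\<^esub> y \<otimes>\<^bsub>wreath L K\<^esub> z = x \<otimes>\<^bsub>wreath L K\<^esub> (y \<otimes>\<^bsub>wreath L K\<^esub> z)"
    if "x \<in> carrier (wreath L K)" "y \<in> carrier (wreath L K)" "z \<in> carrier (wreath L K)" for x y z
  proof -
    obtain f k g l h m where xyz: "x = (f,k)" "y = (g,l)" "z = (h,m)" by (metis prod.exhaust)
    have "k \<in> carrier K" "f \<in> carrier K \<rightarrow> carrier L" "l \<in> carrier K" "g \<in> carrier K \<rightarrow> carrier L"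
      "m \<in> carrier K" "h \<in> carrier K \<rightarrow> carrier L"
      using that xyz by (auto simp: wreath_carrier_iff)
    then show ?thesis unfolding xyz wreath_mult
      by (auto intro!: restrict_ext simp: L.m_assoc K.inv_mult K.m_ac Pi_def)
  qed
  show "\<one>\<^bsub>wreath L K\<^esub> \<otimes>\<^bsub>wreath L K\<^esub> x = x" if "x \<in> carrier (wreath L K)" for x
  proof -
    obtain f k where x: "x = (f,k)" by fastforce
    have "k \<in> carrier K" "f \<in> carrier K \<rightarrow> carrier L" "f \<in> extensional (carrier K)"
      using that x by (auto simp: wreath_carrier_iff)
    then show ?thesis unfolding x wreath_mult wreath_one
      by (auto simp: Pi_def extensional_def intro!: ext)
  qed
  show "\<exists>y\<in>carrier (wreath L K). y \<otimes>\<^bsub>wreath L K\<^esub> x = \<one>\<^bsub>wreath L K\<^esub>"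
    if "x \<in> carrier (wreath L K)" for x
  proof -
    obtain f k where x: "x = (f,k)" by fastforce
    show ?thesis using wreath_inverse(1,2)[OF L K.is_group that[unfolded x]] unfolding x by blast
  qed
qed

section \<open>Word length and distortion\<close>

lemma word_prod_in_generate:
  "set xs \<subseteq> T \<union> m_inv G ` T \<Longrightarrow> word_prod G xs \<in> generate G T"
proof (induction xs)
  case Nil
  show ?case by (simp add: word_prod_def generate.one)
next
  case (Cons g xs)
  have "g \<in> generate G T" using Cons.prems by (auto intro: generate.incl generate.inv)
  then show ?case using Cons by (simp add: word_prod_def generate.eng)
qed

lemma word_length_le:
  "set xs \<subseteq> S \<union> m_inv G ` S \<Longrightarrow> word_prod G xs = g \<Longrightarrow> word_length G S g \<le> length xs"
  unfolding word_length_def by (rule Least_le) blast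

lemma word_length_attained:
  assumes "set xs \<subseteq> S \<union> m_inv G ` S" "word_prod G xs = g"
  obtains ys where "length ys = word_length G S g" "set ys \<subseteq> S \<union> m_inv G ` S" "word_prod G ys = g"
proof -
  let ?P = "\<lambda>n. \<exists>ys. length ys = n \<and> set ys \<subseteq> S \<union> m_inv G ` S \<and> word_prod G ys = g"
  have "?P (Least ?P)" using assms by (intro LeastI[of ?P "length xs"]) blast
  then show ?thesis using that unfolding word_length_def by blast
qed

lemma word_length_le_distortion:
  assumes S: "finite S"
    and words: "\<And>h. h \<in> generate G T \<Longrightarrow> \<exists>xs. set xs \<subseteq> S \<union> m_inv G ` S \<and> word_prod G xs = h"
    and h: "h \<in> generate G T" "word_length G S h \<le> n"
  shows "word_length G T h \<le> distortion G S T n"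
proof -
  let ?D = "{word_length G T h | h. h \<in> generate G T \<and> word_length G S h \<le> n}"
  have "?D \<subseteq> word_length G T ` word_prod G ` {xs. set xs \<subseteq> S \<union> m_inv G ` S \<and> length xs \<le> n}"
  proof
    fix d assume "d \<in> ?D"
    then obtain h' where h': "d = word_length G T h'" "h' \<in> generate G T" "word_length G S h' \<le> n"
      by blast
    obtain xs where "set xs \<subseteq> S \<union> m_inv G ` S" "word_prod G xs = h'" using words[OF h'(2)] by blast
    then obtain ys where "length ys = word_length G S h'" "set ys \<subseteq> S \<union> m_inv G ` S" "word_prod G ys = h'"
      by (rule word_length_attained)
    with h' show "d \<in> word_length G T ` word_prod G ` {xs. set xs \<subseteq> S \<union> m_inv G ` S \<and> length xs \<le> n}"
      by auto
  qed
  moreover have "finite {xs. set xs \<subseteq> S \<union> m_inv G ` S \<and> length xs \<le> n}"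
    using S by (intro finite_lists_length_le) simp
  ultimately have "finite ?D" by (meson finite_imageI finite_subset)
  moreover have "word_length G T h \<in> ?D" using h by blast
  ultimately show ?thesis unfolding distortion_def by (simp add: le_cSup_finite)
qed

lemma dominated_by_rescaling:
  assumes "C > 0" and "\<And>n. f n \<le> g (C * n + C)" and "\<And>n. 0 \<le> g n"
  shows "dominated f g"
  unfolding dominated_def
proof (intro exI[of _ C] conjI allI)
  fix n
  have "g (C * n + C) \<le> real C * g (C * n + C)"
    using assms(1) assms(3)[of "C * n + C"] by (simp add: mult_le_cancel_right1)
  moreover have "0 \<le> real C * real n + real C" by simp
  ultimately show "f n \<le> real C * g (C * n + C) + real C * real n + real C"
    using assms(2)[of n] by linarith
qed (rule assms(1))

section \<open>Words in \<open>\<int> wr K\<close>\<close>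

type_synonym 'k int_wreath_elem = "('k \<Rightarrow> int) \<times> 'k"

type_synonym 'c lamplighter_elem = "(int \<Rightarrow> 'c) \<times> int"

locale int_wreath =
  fixes K :: "('k,'q) monoid_scheme"
  assumes group_K: "group K"
begin

sublocale K: group K by (rule group_K)

abbreviation G where "G \<equiv> wreath integer_group K"

lemma G_carrier_iff:
  "(F,k) \<in> carrier G \<longleftrightarrow> k \<in> carrier K \<and> F \<in> extensional (carrier K) \<and> finite {v \<in> carrier K. F v \<noteq> 0}"
  by (simp add: wreath_carrier_iff)

lemma G_mult: "(F,k) \<otimes>\<^bsub>G\<^esub> (F',k') = ((\<lambda>v\<in>carrier K. F v + F' (v \<otimes>\<^bsub>K\<^esub> inv\<^bsub>K\<^esub> k)), k \<otimes>\<^bsub>K\<^esub> k')"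
  by (simp add: wreath_mult)

lemma G_one: "\<one>\<^bsub>G\<^esub> = ((\<lambda>v\<in>carrier K. 0), \<one>\<^bsub>K\<^esub>)"
  by (simp add: wreath_one)

lemma G_inv: "(F,k) \<in> carrier G \<Longrightarrow> inv\<^bsub>G\<^esub> (F,k) = ((\<lambda>v\<in>carrier K. - F (v \<otimes>\<^bsub>K\<^esub> k)), inv\<^bsub>K\<^esub> k)"
  using wreath_inv[OF group_integer_group group_K] by simp

lemma G_m_closed: "x \<in> carrier G \<Longrightarrow> y \<in> carrier G \<Longrightarrow> x \<otimes>\<^bsub>G\<^esub> y \<in> carrier G"
  by (rule wreath_m_closed[OF group_integer_group group_K])

lemma G_inv_closed: "x \<in> carrier G \<Longrightarrow> inv\<^bsub>G\<^esub> x \<in> carrier G"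
  by (rule wreath_inv_closed[OF group_integer_group group_K])

lemma G_one_closed: "\<one>\<^bsub>G\<^esub> \<in> carrier G"
  by (simp add: wreath_def)

lemma snd_closed: "g \<in> carrier G \<Longrightarrow> snd g \<in> carrier K"
  by (cases g) (simp add: G_carrier_iff)

text \<open>\<open>G\<close> is not associative when \<open>K\<close> is not abelian, so words are always read as
  right-nested products, which the following two functions compute.\<close>

fun word_top :: "'k int_wreath_elem list \<Rightarrow> 'k" where
  "word_top [] = \<one>\<^bsub>K\<^esub>"
| "word_top (g # xs) = snd g \<otimes>\<^bsub>K\<^esub> word_top xs"

fun word_base :: "'k int_wreath_elem list \<Rightarrow> 'k \<Rightarrow> int" where
  "word_base [] v = 0"
| "word_base (g # xs) v = fst g v + word_base xs (v \<otimes>\<^bsub>K\<^esub> inv\<^bsub>K\<^esub> snd g)"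

lemma word_top_closed: "set xs \<subseteq> carrier G \<Longrightarrow> word_top xs \<in> carrier K"
  by (induction xs) (auto simp: snd_closed)

lemma word_prod_eq:
  "set xs \<subseteq> carrier G \<Longrightarrow> word_prod G xs = ((\<lambda>v\<in>carrier K. word_base xs v), word_top xs)"
proof (induction xs)
  case Nil
  show ?case by (simp add: word_prod_def G_one restrict_def)
next
  case (Cons g xs)
  obtain f l where g: "g = (f,l)" by fastforce
  have "l \<in> carrier K" using Cons.prems g by (auto simp: G_carrier_iff)
  then show ?case using Cons by (auto simp: word_prod_def g G_mult intro!: restrict_ext)
qed

lemma word_prod_closed: "set xs \<subseteq> carrier G \<Longrightarrow> word_prod G xs \<in> carrier G"
  by (induction xs) (auto simp: word_prod_def G_one_closed G_m_closed)

lemma finite_support_word_base: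
  assumes "set xs \<subseteq> carrier G" and "\<pi> \<in> carrier K"
  shows "finite {v \<in> carrier K. word_base xs (v \<otimes>\<^bsub>K\<^esub> \<pi>) \<noteq> 0}"
proof -
  have "finite {v \<in> carrier K. (\<lambda>v\<in>carrier K. word_base xs v) v \<noteq> 0}"
    using word_prod_closed[OF assms(1)] by (simp only: word_prod_eq[OF assms(1)] G_carrier_iff)
  then have "finite {v \<in> carrier K. word_base xs v \<noteq> 0}"
    by (rule rev_finite_subset) auto
  then show ?thesis using assms(2) by (rule K.finite_support_translate[rotated])
qed

lemma word_top_append:
  "set xs \<subseteq> carrier G \<Longrightarrow> set ys \<subseteq> carrier G \<Longrightarrow> word_top (xs @ ys) = word_top xs \<otimes>\<^bsub>K\<^esub> word_top ys"
  by (induction xs) (auto simp: K.m_assoc word_top_closed snd_closed)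

lemma word_base_append:
  "v \<in> carrier K \<Longrightarrow> set xs \<subseteq> carrier G \<Longrightarrow>
   word_base (xs @ ys) v = word_base xs v + word_base ys (v \<otimes>\<^bsub>K\<^esub> inv\<^bsub>K\<^esub> word_top (rev xs))"
proof (induction xs arbitrary: v)
  case (Cons g xs)
  have "snd g \<in> carrier K" "word_top (rev xs) \<in> carrier K"
    using Cons.prems word_top_closed[of "rev xs"] by (auto intro: snd_closed)
  then show ?case
    using Cons.IH[of "v \<otimes>\<^bsub>K\<^esub> inv\<^bsub>K\<^esub> snd g"] Cons.prems
    by (simp add: word_top_append K.m_assoc K.inv_mult_group snd_closed)
qed simp

abbreviation top :: "'k \<Rightarrow> 'k int_wreath_elem" where
  "top \<equiv> wr_top integer_group K"

lemma top_eq: "top k = ((\<lambda>v\<in>carrier K. 0), k)"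
  by (simp add: wr_top_def)

lemma top_closed: "k \<in> carrier K \<Longrightarrow> top k \<in> carrier G"
  by (simp add: top_eq G_carrier_iff)

lemma top_mult: "k \<in> carrier K \<Longrightarrow> top k \<otimes>\<^bsub>G\<^esub> top l = top (k \<otimes>\<^bsub>K\<^esub> l)"
  by (auto simp: top_eq G_mult intro!: restrict_ext)

lemma inv_top: "k \<in> carrier K \<Longrightarrow> inv\<^bsub>G\<^esub> (top k) = top (inv\<^bsub>K\<^esub> k)"
  using top_closed[of k] by (auto simp: top_eq G_inv intro!: restrict_ext)

lemma top_word_closed: "set u \<subseteq> top ` carrier K \<Longrightarrow> set u \<subseteq> carrier G"
  using top_closed by auto

lemma word_base_top_word: "set u \<subseteq> top ` carrier K \<Longrightarrow> v \<in> carrier K \<Longrightarrow> word_base u v = 0"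
  by (induction u arbitrary: v) (auto simp: top_eq)

definition inv_word :: "'k int_wreath_elem list \<Rightarrow> 'k int_wreath_elem list" where
  "inv_word u = rev (map (m_inv G) u)"

lemma inv_word_top_word: "set u \<subseteq> top ` carrier K \<Longrightarrow> set (inv_word u) \<subseteq> top ` carrier K"
  by (auto simp: inv_word_def inv_top)

lemma word_top_inv_word:
  "set u \<subseteq> top ` carrier K \<Longrightarrow> word_top (inv_word u) = inv\<^bsub>K\<^esub> word_top u"
proof (induction u)
  case (Cons g u)
  then obtain k where k: "k \<in> carrier K" "g = top k" by auto
  have u: "set u \<subseteq> top ` carrier K" using Cons.prems by simp
  have "inv_word (g # u) = inv_word u @ [top (inv\<^bsub>K\<^esub> k)]"
    by (simp add: inv_word_def k inv_top)
  then have "word_top (inv_word (g # u)) = word_top (inv_word u) \<otimes>\<^bsub>K\<^esub> inv\<^bsub>K\<^esub> k"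
    using word_top_append[of "inv_word u" "[top (inv\<^bsub>K\<^esub> k)]"] top_word_closed[OF inv_word_top_word[OF u]]
      top_closed[OF K.inv_closed[OF k(1)]] k(1)
    by (simp add: top_eq)
  then show ?case
    using Cons.IH[OF u] k word_top_closed[OF top_word_closed[OF u]] by (simp add: top_eq K.inv_mult_group)
qed (simp add: inv_word_def)

definition base :: "('k \<Rightarrow> int) \<Rightarrow> 'k int_wreath_elem" where
  "base F = (restrict F (carrier K), \<one>\<^bsub>K\<^esub>)"

lemma base_closed: "finite {v \<in> carrier K. F v \<noteq> 0} \<Longrightarrow> base F \<in> carrier G"
  by (auto simp: base_def G_carrier_iff elim!: rev_finite_subset)

lemma inv_base: "finite {v \<in> carrier K. F v \<noteq> 0} \<Longrightarrow> inv\<^bsub>G\<^esub> (base F) = base (\<lambda>v. - F v)"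
  using base_closed by (auto simp: base_def G_inv intro!: restrict_ext)

text \<open>Both orders matter: \<open>word_top\<close> of a word is the top part of its product, while that of the
  reversed word is the translation appearing in \<open>word_base_append\<close>.\<close>

definition loop :: "'k int_wreath_elem list \<Rightarrow> bool" where
  "loop xs \<longleftrightarrow> set xs \<subseteq> carrier G \<and> word_top xs = \<one>\<^bsub>K\<^esub> \<and> word_top (rev xs) = \<one>\<^bsub>K\<^esub>"

lemma loop_append: "loop xs \<Longrightarrow> loop ys \<Longrightarrow> loop (xs @ ys)"
  by (simp add: loop_def word_top_append)

lemma word_base_append_loop:
  "loop xs \<Longrightarrow> v \<in> carrier K \<Longrightarrow> word_base (xs @ ys) v = word_base xs v + word_base ys v"
  by (simp add: loop_def word_base_append)

lemma word_prod_loop: "loop xs \<Longrightarrow> word_prod G xs = base (word_base xs)"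
  by (simp add: loop_def word_prod_eq base_def)

lemma base_cong: "(\<And>v. v \<in> carrier K \<Longrightarrow> F v = F' v) \<Longrightarrow> base F = base F'"
  by (simp add: base_def cong: restrict_cong)

lemma loop_replicate_base: "finite {v \<in> carrier K. F v \<noteq> 0} \<Longrightarrow> loop (replicate j (base F))"
proof -
  assume "finite {v \<in> carrier K. F v \<noteq> 0}"
  then have "base F \<in> carrier G" "snd (base F) = \<one>\<^bsub>K\<^esub>" by (rule base_closed) (simp add: base_def)
  then have "set (replicate j (base F)) \<subseteq> carrier G" "word_top (replicate j (base F)) = \<one>\<^bsub>K\<^esub>"
    by (induction j) auto
  then show ?thesis by (simp add: loop_def)
qed

lemma word_base_replicate_base:
  "v \<in> carrier K \<Longrightarrow> word_base (replicate j (base F)) v = int j * F v"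
  by (induction j) (auto simp: base_def algebra_simps)

lemma loop_base: "finite {v \<in> carrier K. F v \<noteq> 0} \<Longrightarrow> loop [base F]"
  using loop_replicate_base[where j = 1] by simp

lemma fst_base: "v \<in> carrier K \<Longrightarrow> fst (base F) v = F v"
  by (simp add: base_def)

definition conj_word ::
  "'k int_wreath_elem list \<Rightarrow> 'k int_wreath_elem list \<Rightarrow> 'k int_wreath_elem list" where
  "conj_word u mid = u @ mid @ inv_word u"

lemma set_conj_word: "set (conj_word u mid) = set u \<union> set mid \<union> m_inv G ` set u"
  by (auto simp: conj_word_def inv_word_def)

lemma loop_conj_word:
  assumes u: "set u \<subseteq> top ` carrier K" and mid: "loop mid"
  shows "loop (conj_word u mid)"
proof -
  have cu: "set u \<subseteq> carrier G" "set (rev u) \<subseteq> carrier G" using top_word_closed[OF u] by auto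
  have ci: "set (inv_word u) \<subseteq> carrier G" "set (rev (inv_word u)) \<subseteq> carrier G"
    using top_word_closed[OF inv_word_top_word[OF u]] by auto
  have "rev (inv_word u) = inv_word (rev u)" by (simp add: inv_word_def rev_map)
  then have "word_top (rev (inv_word u)) = inv\<^bsub>K\<^esub> word_top (rev u)"
    using u by (simp add: word_top_inv_word)
  then show ?thesis
    using cu ci mid word_top_closed[OF cu(1)] word_top_closed[OF cu(2)]
    by (simp add: loop_def conj_word_def word_top_append word_top_inv_word[OF u])
qed

lemma word_base_conj_word:
  assumes u: "set u \<subseteq> top ` carrier K" and mid: "loop mid" and v: "v \<in> carrier K"
  shows "word_base (conj_word u mid) v = word_base mid (v \<otimes>\<^bsub>K\<^esub> inv\<^bsub>K\<^esub> word_top (rev u))"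
proof -
  have cu: "set u \<subseteq> carrier G" using top_word_closed[OF u] .
  have w: "v \<otimes>\<^bsub>K\<^esub> inv\<^bsub>K\<^esub> word_top (rev u) \<in> carrier K"
    using v word_top_closed[of "rev u"] cu by simp
  have "word_base (conj_word u mid) v
      = word_base u v + (word_base mid (v \<otimes>\<^bsub>K\<^esub> inv\<^bsub>K\<^esub> word_top (rev u))
        + word_base (inv_word u) (v \<otimes>\<^bsub>K\<^esub> inv\<^bsub>K\<^esub> word_top (rev u)))"
    using v w mid cu by (simp add: conj_word_def word_base_append word_base_append_loop)
  then show ?thesis
    using v w by (simp add: word_base_top_word[OF u] word_base_top_word[OF inv_word_top_word[OF u]])
qed

abbreviation lamp :: "'k int_wreath_elem" where
  "lamp \<equiv> wr_base integer_group K (1::int)"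

lemma lamp_eq: "lamp = base (\<lambda>v. if v = \<one>\<^bsub>K\<^esub> then 1 else 0)"
  by (auto simp: wr_base_def base_def intro!: restrict_ext)

lemma lamp_closed: "lamp \<in> carrier G"
  unfolding lamp_eq by (rule base_closed) (auto intro: finite_subset[of _ "{\<one>\<^bsub>K\<^esub>}"])

lemma inv_lamp: "inv\<^bsub>G\<^esub> lamp = base (\<lambda>v. if v = \<one>\<^bsub>K\<^esub> then -1 else 0)"
proof -
  have "(\<lambda>v. - (if v = \<one>\<^bsub>K\<^esub> then 1 else 0)) = (\<lambda>v. if v = \<one>\<^bsub>K\<^esub> then - 1 else (0::int))"
    by auto
  then show ?thesis
    unfolding lamp_eq by (subst inv_base) (auto intro: finite_subset[of _ "{\<one>\<^bsub>K\<^esub>}"])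
qed

lemma finite_support_two_points:
  "finite {v \<in> carrier K. (if v = p then a else 0) + (if v = q then b else (0::int)) \<noteq> 0}"
  by (rule finite_subset[of _ "{p, q}"]) auto

definition bump :: "'k \<Rightarrow> 'k int_wreath_elem" where
  "bump z = base (\<lambda>v. (if v = \<one>\<^bsub>K\<^esub> then 2 else 0) + (if v = z then -1 else 0))"

lemma bump_closed: "bump z \<in> carrier G"
  unfolding bump_def by (rule base_closed[OF finite_support_two_points])

lemma inv_bump: "inv\<^bsub>G\<^esub> (bump z) = base (\<lambda>v. (if v = \<one>\<^bsub>K\<^esub> then -2 else 0) + (if v = z then 1 else 0))"
proof -
  have "(\<lambda>v. - ((if v = \<one>\<^bsub>K\<^esub> then 2 else 0) + (if v = z then -1 else 0)))
      = (\<lambda>v. (if v = \<one>\<^bsub>K\<^esub> then -2 else 0) + (if v = z then 1 else (0::int)))"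
    by auto
  then show ?thesis unfolding bump_def by (simp add: inv_base[OF finite_support_two_points])
qed

lemma fst_bump_translate:
  assumes "z \<in> carrier K" "p \<in> carrier K" "v \<in> carrier K"
  shows "fst (bump z) (v \<otimes>\<^bsub>K\<^esub> inv\<^bsub>K\<^esub> p) = (if v = p then 2 else 0) + (if v = z \<otimes>\<^bsub>K\<^esub> p then -1 else 0)"
    and "fst (inv\<^bsub>G\<^esub> (bump z)) (v \<otimes>\<^bsub>K\<^esub> inv\<^bsub>K\<^esub> p) = (if v = p then -2 else 0) + (if v = z \<otimes>\<^bsub>K\<^esub> p then 1 else 0)"
  using assms unfolding inv_bump unfolding bump_def by (simp_all add: fst_base K.inv_solve_right')

lemma commutator_top_lamp:
  assumes k: "k \<in> carrier K"
  shows "commutator G (top k) lamp \<otimes>\<^bsub>G\<^esub> lamp = bump (inv\<^bsub>K\<^esub> k)"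
proof -
  have at: "v \<otimes>\<^bsub>K\<^esub> inv\<^bsub>K\<^esub> (inv\<^bsub>K\<^esub> k) = \<one>\<^bsub>K\<^esub> \<longleftrightarrow> v = inv\<^bsub>K\<^esub> k" if "v \<in> carrier K" for v
    using that k K.inv_solve_right'[of "\<one>\<^bsub>K\<^esub>" v "inv\<^bsub>K\<^esub> k"] by simp
  show ?thesis
    unfolding commutator_def inv_top[OF k] inv_lamp unfolding lamp_eq top_eq bump_def base_def G_mult
    using k at by (auto intro!: restrict_ext)
qed

definition weight :: "('k \<Rightarrow> int) \<Rightarrow> ('k \<Rightarrow> int) \<Rightarrow> int" where
  "weight c H = (\<Sum>v\<in>{v \<in> carrier K. H v \<noteq> 0}. H v * c v)"

lemma weight_eq_sum:
  assumes "finite A" "A \<subseteq> carrier K" "{v \<in> carrier K. H v \<noteq> 0} \<subseteq> A"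
  shows "weight c H = (\<Sum>v\<in>A. H v * c v)"
  unfolding weight_def by (rule sum.mono_neutral_left) (use assms in auto)

lemma weight_cong: "(\<And>v. v \<in> carrier K \<Longrightarrow> H v = H' v) \<Longrightarrow> weight c H = weight c H'"
  unfolding weight_def by (rule sum.cong) auto

lemma weight_add:
  assumes "finite {v \<in> carrier K. H v \<noteq> 0}" "finite {v \<in> carrier K. H' v \<noteq> 0}"
  shows "weight c (\<lambda>v. H v + H' v) = weight c H + weight c H'"
proof -
  let ?A = "{v \<in> carrier K. H v \<noteq> 0} \<union> {v \<in> carrier K. H' v \<noteq> 0}"
  have A: "finite ?A" "?A \<subseteq> carrier K" using assms by auto
  have "weight c (\<lambda>v. H v + H' v) = (\<Sum>v\<in>?A. H v * c v) + (\<Sum>v\<in>?A. H' v * c v)"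
    by (subst weight_eq_sum[OF A]) (auto simp: distrib_right sum.distrib)
  also have "\<dots> = weight c H + weight c H'"
    by (simp add: weight_eq_sum[OF A])
  finally show ?thesis .
qed

lemma weight_two_points:
  assumes "p \<in> carrier K" "q \<in> carrier K"
  shows "weight c (\<lambda>v. (if v = p then a else 0) + (if v = q then b else 0)) = a * c p + b * c q"
proof -
  have "weight c (\<lambda>v. (if v = p then a else 0) + (if v = q then b else 0))
      = (\<Sum>v\<in>{p,q}. ((if v = p then a else 0) + (if v = q then b else 0)) * c v)"
    by (rule weight_eq_sum) (use assms in auto)
  also have "\<dots> = a * c p + b * c q"
    by (cases "p = q") (auto simp: algebra_simps)
  finally show ?thesis .
qed

lemma weight_translate_bump:
  assumes z: "z \<in> carrier K" and \<pi>: "\<pi> \<in> carrier K"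
  shows "weight c (\<lambda>v. fst (bump z) (v \<otimes>\<^bsub>K\<^esub> inv\<^bsub>K\<^esub> \<pi>)) = 2 * c \<pi> - c (z \<otimes>\<^bsub>K\<^esub> \<pi>)"
    and "weight c (\<lambda>v. fst (inv\<^bsub>G\<^esub> (bump z)) (v \<otimes>\<^bsub>K\<^esub> inv\<^bsub>K\<^esub> \<pi>)) = c (z \<otimes>\<^bsub>K\<^esub> \<pi>) - 2 * c \<pi>"
  using weight_two_points[OF \<pi> K.m_closed[OF z \<pi>]] z \<pi>
  by (simp_all add: fst_bump_translate cong: weight_cong)

lemma weight_translate_top:
  "\<pi> \<in> carrier K \<Longrightarrow> weight c (\<lambda>v. fst (top k) (v \<otimes>\<^bsub>K\<^esub> inv\<^bsub>K\<^esub> \<pi>)) = 0"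
  by (simp add: top_eq weight_def)

lemma weight_word_base_le:
  assumes letters: "\<And>g \<pi>. g \<in> A \<Longrightarrow> \<pi> \<in> carrier K \<Longrightarrow> \<bar>weight c (\<lambda>v. fst g (v \<otimes>\<^bsub>K\<^esub> inv\<^bsub>K\<^esub> \<pi>))\<bar> \<le> b"
    and A: "A \<subseteq> carrier G" and xs: "set xs \<subseteq> A" and \<pi>: "\<pi> \<in> carrier K"
  shows "\<bar>weight c (\<lambda>v. word_base xs (v \<otimes>\<^bsub>K\<^esub> inv\<^bsub>K\<^esub> \<pi>))\<bar> \<le> b * int (length xs)"
  using xs \<pi>
proof (induction xs arbitrary: \<pi>)
  case Nil
  show ?case by (simp add: weight_def)
next
  case (Cons g xs)
  have g: "g \<in> carrier G" "snd g \<in> carrier K" and xs: "set xs \<subseteq> carrier G"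
    using Cons.prems A by (auto intro: snd_closed)
  have "finite {v \<in> carrier K. fst g v \<noteq> 0}"
    using g(1) by (cases g) (simp add: G_carrier_iff)
  then have fin_g: "finite {v \<in> carrier K. fst g (v \<otimes>\<^bsub>K\<^esub> inv\<^bsub>K\<^esub> \<pi>) \<noteq> 0}"
    using Cons.prems(2) by (simp add: K.finite_support_translate)
  have fin_xs: "finite {v \<in> carrier K. word_base xs (v \<otimes>\<^bsub>K\<^esub> inv\<^bsub>K\<^esub> (snd g \<otimes>\<^bsub>K\<^esub> \<pi>)) \<noteq> 0}"
    using finite_support_word_base[OF xs] g Cons.prems(2) by simp
  have "weight c (\<lambda>v. word_base (g # xs) (v \<otimes>\<^bsub>K\<^esub> inv\<^bsub>K\<^esub> \<pi>))
      = weight c (\<lambda>v. fst g (v \<otimes>\<^bsub>K\<^esub> inv\<^bsub>K\<^esub> \<pi>) + word_base xs (v \<otimes>\<^bsub>K\<^esub> inv\<^bsub>K\<^esub> (snd g \<otimes>\<^bsub>K\<^esub> \<pi>)))"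
    by (rule weight_cong) (use g Cons.prems(2) in \<open>simp add: K.m_assoc K.inv_mult_group\<close>)
  also have "\<dots> = weight c (\<lambda>v. fst g (v \<otimes>\<^bsub>K\<^esub> inv\<^bsub>K\<^esub> \<pi>))
      + weight c (\<lambda>v. word_base xs (v \<otimes>\<^bsub>K\<^esub> inv\<^bsub>K\<^esub> (snd g \<otimes>\<^bsub>K\<^esub> \<pi>)))"
    (is "_ = ?w\<^sub>1 + ?w\<^sub>2")
    by (rule weight_add[OF fin_g fin_xs])
  finally have split: "weight c (\<lambda>v. word_base (g # xs) (v \<otimes>\<^bsub>K\<^esub> inv\<^bsub>K\<^esub> \<pi>)) = ?w\<^sub>1 + ?w\<^sub>2" .
  have "\<bar>?w\<^sub>1 + ?w\<^sub>2\<bar> \<le> \<bar>?w\<^sub>1\<bar> + \<bar>?w\<^sub>2\<bar>" by (rule abs_triangle_ineq)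
  moreover have "\<bar>?w\<^sub>1\<bar> \<le> b" using letters Cons.prems by simp
  moreover have "\<bar>?w\<^sub>2\<bar> \<le> b * int (length xs)" using Cons.IH Cons.prems g by simp
  moreover have "b * int (length (g # xs)) = b + b * int (length xs)" by (simp add: algebra_simps)
  ultimately show ?case using split by linarith
qed

lemma top_word_of_generate:
  assumes "X \<subseteq> carrier K" and "k \<in> generate K X"
  shows "\<exists>u. set u \<subseteq> top ` (X \<union> m_inv K ` X) \<and> word_top u = k"
  using assms(2)
proof (induction k rule: generate.induct)
  case one
  show ?case by (rule exI[of _ "[]"]) simp
next
  case (incl h)
  then show ?case using assms(1) by (intro exI[of _ "[top h]"]) (auto simp: top_eq)
next
  case (inv h)
  then show ?case using assms(1) by (intro exI[of _ "[top (inv\<^bsub>K\<^esub> h)]"]) (auto simp: top_eq)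
next
  case (eng h\<^sub>1 h\<^sub>2)
  then obtain u\<^sub>1 u\<^sub>2 where u: "set u\<^sub>1 \<subseteq> top ` (X \<union> m_inv K ` X)" "word_top u\<^sub>1 = h\<^sub>1"
    "set u\<^sub>2 \<subseteq> top ` (X \<union> m_inv K ` X)" "word_top u\<^sub>2 = h\<^sub>2" by blast
  have "top ` (X \<union> m_inv K ` X) \<subseteq> carrier G" using assms(1) top_closed by auto
  then have "word_top (u\<^sub>1 @ u\<^sub>2) = h\<^sub>1 \<otimes>\<^bsub>K\<^esub> h\<^sub>2" using u by (auto simp: word_top_append)
  then show ?case using u by (intro exI[of _ "u\<^sub>1 @ u\<^sub>2"]) auto
qed

lemma lamp_alphabet_closed: "B \<subseteq> carrier K \<Longrightarrow> top ` B \<union> {lamp, inv\<^bsub>G\<^esub> lamp} \<subseteq> carrier G"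
  using top_closed lamp_closed G_inv_closed by auto

text \<open>A point of the base group is reached by conjugating \<open>|m|\<close> copies of \<open>lamp\<^sup>\<plusminus>\<^sup>1\<close>
  with a word of top elements leading to the point.\<close>

lemma word_add_point:
  assumes B: "B \<subseteq> carrier K" "m_inv K ` B \<subseteq> B"
    and u: "set u \<subseteq> top ` B" "word_top u = p"
    and ws: "set ws \<subseteq> top ` B \<union> {lamp, inv\<^bsub>G\<^esub> lamp}"
  shows "\<exists>ws'. set ws' \<subseteq> top ` B \<union> {lamp, inv\<^bsub>G\<^esub> lamp} \<and> word_top ws' = word_top ws
    \<and> (\<forall>v\<in>carrier K. word_base ws' v = word_base ws v + (if v = p then m else 0))"
proof -
  define F where "F = (\<lambda>v. if v = \<one>\<^bsub>K\<^esub> then sgn m else 0)"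
  define ws' where "ws' = conj_word (rev u) (replicate (nat \<bar>m\<bar>) (base F)) @ ws"
  have F: "finite {v \<in> carrier K. F v \<noteq> 0}" by (rule finite_subset[of _ "{\<one>\<^bsub>K\<^esub>}"]) (auto simp: F_def)
  have ru: "set (rev u) \<subseteq> top ` carrier K" using u(1) B(1) by auto
  have conj: "loop (conj_word (rev u) (replicate (nat \<bar>m\<bar>) (base F)))"
    by (rule loop_conj_word[OF ru loop_replicate_base[OF F]])
  have p: "p \<in> carrier K" using word_top_closed[of u] top_word_closed[OF ru] u(2) by simp
  have "m > 0 \<Longrightarrow> base F = lamp" unfolding F_def lamp_eq by (rule arg_cong[where f = base]) auto
  moreover have "m < 0 \<Longrightarrow> base F = inv\<^bsub>G\<^esub> lamp"
    unfolding F_def inv_lamp by (rule arg_cong[where f = base]) auto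
  ultimately have lamp_sign: "m \<noteq> 0 \<Longrightarrow> base F \<in> {lamp, inv\<^bsub>G\<^esub> lamp}"
    by (cases "m > 0") auto
  have "inv\<^bsub>G\<^esub> (top b) \<in> top ` B" if "b \<in> B" for b
    using that B inv_top[of b] by auto
  then have "m_inv G ` set u \<subseteq> top ` B" using u(1) by blast
  moreover have "set (replicate (nat \<bar>m\<bar>) (base F)) \<subseteq> {lamp, inv\<^bsub>G\<^esub> lamp}"
    using lamp_sign by auto
  ultimately have "set ws' \<subseteq> top ` B \<union> {lamp, inv\<^bsub>G\<^esub> lamp}"
    using u(1) ws unfolding ws'_def set_append set_conj_word set_rev by (intro Un_least) auto
  moreover have wsG: "set ws \<subseteq> carrier G"
    using ws lamp_alphabet_closed[OF B(1)] by blast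
  moreover have "word_top ws' = word_top ws"
    using conj wsG word_top_closed[OF wsG] by (simp add: ws'_def word_top_append loop_def)
  moreover have "word_base ws' v = word_base ws v + (if v = p then m else 0)" if v: "v \<in> carrier K" for v
  proof -
    have "word_base ws' v = int (nat \<bar>m\<bar>) * F (v \<otimes>\<^bsub>K\<^esub> inv\<^bsub>K\<^esub> p) + word_base ws v"
      using conj v u(2)
      by (simp add: ws'_def word_base_append_loop word_base_conj_word[OF ru loop_replicate_base[OF F]]
          word_base_replicate_base p)
    also have "int (nat \<bar>m\<bar>) * F (v \<otimes>\<^bsub>K\<^esub> inv\<^bsub>K\<^esub> p) = (if v = p then m else 0)"
      using v p K.inv_solve_right'[of "\<one>\<^bsub>K\<^esub>" v p] by (simp add: F_def abs_mult_sgn)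
    finally show ?thesis by simp
  qed
  ultimately show ?thesis by blast
qed

lemma word_with_base:
  assumes B: "B \<subseteq> carrier K" "m_inv K ` B \<subseteq> B"
    and top_words: "\<And>k. k \<in> carrier K \<Longrightarrow> \<exists>u. set u \<subseteq> top ` B \<and> word_top u = k"
    and k: "k \<in> carrier K" and P: "finite P" "{v \<in> carrier K. H v \<noteq> 0} \<subseteq> P"
  shows "\<exists>ws. set ws \<subseteq> top ` B \<union> {lamp, inv\<^bsub>G\<^esub> lamp} \<and> word_top ws = k
    \<and> (\<forall>v\<in>carrier K. word_base ws v = H v)"
  using P
proof (induction P arbitrary: H)
  case empty
  obtain u where u: "set u \<subseteq> top ` B" "word_top u = k" using top_words[OF k] by blast
  then have "set u \<subseteq> top ` carrier K" using image_mono[OF B(1), of top] by blast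
  then show ?case using u empty word_base_top_word[of u] by (intro exI[of _ u]) auto
next
  case (insert p P)
  define H' where "H' = H(p := 0)"
  have "{v \<in> carrier K. H' v \<noteq> 0} \<subseteq> P" using insert.prems by (auto simp: H'_def)
  then obtain ws where ws: "set ws \<subseteq> top ` B \<union> {lamp, inv\<^bsub>G\<^esub> lamp}" "word_top ws = k"
    "\<forall>v\<in>carrier K. word_base ws v = H' v"
    using insert.IH by blast
  show ?case
  proof (cases "p \<in> carrier K")
    case False
    then show ?thesis using ws by (intro exI[of _ ws]) (auto simp: H'_def)
  next
    case True
    obtain u where "set u \<subseteq> top ` B" "word_top u = p" using top_words[OF True] by blast
    from word_add_point[OF B this ws(1), of "H p"] obtain ws' where
      "set ws' \<subseteq> top ` B \<union> {lamp, inv\<^bsub>G\<^esub> lamp}" "word_top ws' = word_top ws"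
      "\<forall>v\<in>carrier K. word_base ws' v = word_base ws v + (if v = p then H p else 0)"
      by blast
    then show ?thesis using ws by (intro exI[of _ ws']) (auto simp: H'_def)
  qed
qed

lemma word_of_carrier:
  assumes B: "B \<subseteq> carrier K" "m_inv K ` B \<subseteq> B"
    and top_words: "\<And>k. k \<in> carrier K \<Longrightarrow> \<exists>u. set u \<subseteq> top ` B \<and> word_top u = k"
    and g: "g \<in> carrier G"
  shows "\<exists>ws. set ws \<subseteq> top ` B \<union> {lamp, inv\<^bsub>G\<^esub> lamp} \<and> word_prod G ws = g"
proof -
  obtain F k where g': "g = (F, k)" by fastforce
  have k: "k \<in> carrier K" and F: "F \<in> extensional (carrier K)" "finite {v \<in> carrier K. F v \<noteq> 0}"
    using g g' by (auto simp: G_carrier_iff)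
  obtain ws where ws: "set ws \<subseteq> top ` B \<union> {lamp, inv\<^bsub>G\<^esub> lamp}" "word_top ws = k"
    "\<forall>v\<in>carrier K. word_base ws v = F v"
    using word_with_base[OF B top_words k F(2) order_refl] by blast
  have "set ws \<subseteq> carrier G"
    using ws(1) lamp_alphabet_closed[OF B(1)] by blast
  then have "word_prod G ws = g"
    using ws F(1) by (auto simp: g' word_prod_eq intro: extensionalityI[OF _ F(1)])
  then show ?thesis using ws(1) by blast
qed

lemma generate_subset_carrier:
  assumes "T \<subseteq> carrier G"
  shows "generate G T \<subseteq> carrier G"
proof
  fix h assume "h \<in> generate G T"
  then show "h \<in> carrier G"
    by (induction h rule: generate.induct) (use assms in \<open>auto simp: G_one_closed G_inv_closed G_m_closed\<close>)
qed

end

section \<open>The lamplighter group \<open>C wr \<int>\<close>\<close>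

locale lamplighter =
  fixes C :: "('c,'z) monoid_scheme" and s :: 'c
  assumes group_C: "group C" and s_closed: "s \<in> carrier C"
begin

sublocale C: group C by (rule group_C)

sublocale int_wreath "wreath C integer_group"
  by (rule int_wreath.intro, rule wreath_group[OF group_C abelian_integer_group])

abbreviation K where "K \<equiv> wreath C integer_group"

lemma K_carrier_iff: "(f,m) \<in> carrier K \<longleftrightarrow> f \<in> UNIV \<rightarrow> carrier C \<and> finite {v. f v \<noteq> \<one>\<^bsub>C\<^esub>}"
  by (simp add: wreath_carrier_iff)

lemma K_mult: "(f,m) \<otimes>\<^bsub>K\<^esub> (g,l) = ((\<lambda>v. f v \<otimes>\<^bsub>C\<^esub> g (v - m)), m + l)"
  by (simp add: wreath_mult restrict_UNIV)

lemma K_one: "\<one>\<^bsub>K\<^esub> = ((\<lambda>v. \<one>\<^bsub>C\<^esub>), 0)"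
  by (simp add: wreath_one restrict_UNIV)

lemma K_inv: "(f,m) \<in> carrier K \<Longrightarrow> inv\<^bsub>K\<^esub> (f,m) = ((\<lambda>v. inv\<^bsub>C\<^esub> f (v + m)), - m)"
  using wreath_inv[OF group_C group_integer_group] by (simp add: restrict_UNIV)

definition lamp_at :: "int \<Rightarrow> 'c \<Rightarrow> int \<Rightarrow> 'c lamplighter_elem" where
  "lamp_at j c m = ((\<lambda>v. if v = j then c else \<one>\<^bsub>C\<^esub>), m)"

definition shift :: "int \<Rightarrow> 'c lamplighter_elem" where
  "shift m = ((\<lambda>v. \<one>\<^bsub>C\<^esub>), m)"

lemma lamp_at_closed: "c \<in> carrier C \<Longrightarrow> lamp_at j c m \<in> carrier K"
  by (auto simp: lamp_at_def K_carrier_iff intro: finite_subset[of _ "{j}"])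

lemma shift_closed: "shift m \<in> carrier K"
  by (simp add: shift_def K_carrier_iff)

lemma shift_eq_lamp_at: "shift m = lamp_at j \<one>\<^bsub>C\<^esub> m"
  by (simp add: shift_def lamp_at_def)

lemma shift_mult: "shift m \<otimes>\<^bsub>K\<^esub> shift m' = shift (m + m')"
  by (simp add: shift_def K_mult)

lemma shift_mult_lamp_at:
  "c \<in> carrier C \<Longrightarrow> shift m \<otimes>\<^bsub>K\<^esub> lamp_at j c m' = lamp_at (j + m) c (m + m')"
  by (auto simp: shift_def lamp_at_def K_mult)

abbreviation sK where "sK \<equiv> wr_base C integer_group s"
abbreviation tK where "tK \<equiv> wr_top C integer_group (1::int)"

lemma sK_eq: "sK = lamp_at 0 s 0"
  by (simp add: wr_base_def lamp_at_def restrict_UNIV)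

lemma tK_eq: "tK = shift 1"
  by (simp add: wr_top_def shift_def restrict_UNIV)

lemma sK_closed: "sK \<in> carrier K"
  by (simp add: sK_eq lamp_at_closed s_closed)

lemma tK_closed: "tK \<in> carrier K"
  by (simp add: tK_eq shift_closed)

lemma tK_sK_eq: "tK \<otimes>\<^bsub>K\<^esub> sK = lamp_at 1 s 1"
  by (simp add: tK_eq sK_eq shift_mult_lamp_at s_closed)

abbreviation x_inv where "x_inv \<equiv> lamp_at 0 (inv\<^bsub>C\<^esub> s) (-1)"
abbreviation y_inv where "y_inv \<equiv> shift (-1)"

lemma x_inv_closed: "x_inv \<in> carrier K"
  by (simp add: lamp_at_closed s_closed)

lemma inv_tK_sK: "inv\<^bsub>K\<^esub> (tK \<otimes>\<^bsub>K\<^esub> sK) = x_inv"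
  using lamp_at_closed[OF s_closed] unfolding tK_sK_eq by (auto simp: K_inv lamp_at_def)

lemma inv_tK: "inv\<^bsub>K\<^esub> tK = y_inv"
  using shift_closed unfolding tK_eq by (simp add: K_inv shift_def)

lemma inv_sK_inv_tK: "inv\<^bsub>K\<^esub> sK \<otimes>\<^bsub>K\<^esub> inv\<^bsub>K\<^esub> tK = x_inv"
  using lamp_at_closed[OF s_closed] shift_closed
  by (simp add: inv_tK_sK[symmetric] K.inv_mult_group sK_eq tK_eq)

text \<open>In terms of the images \<open>x = t s\<close> and \<open>y = t\<close> in \<open>K\<close>, \<open>marked n = y\<^sup>-\<^sup>n x\<^sup>-\<^sup>1\<close> and
  \<open>unmarked n = y\<^sup>-\<^sup>n y\<^sup>-\<^sup>1\<close>.\<close>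

definition marked :: "nat \<Rightarrow> 'c lamplighter_elem" where
  "marked n = lamp_at (- int n) (inv\<^bsub>C\<^esub> s) (- int n - 1)"

definition unmarked :: "nat \<Rightarrow> 'c lamplighter_elem" where
  "unmarked n = shift (- int n - 1)"

lemma marked_closed: "marked n \<in> carrier K"
  by (simp add: marked_def lamp_at_closed s_closed)

lemma unmarked_closed: "unmarked n \<in> carrier K"
  by (simp add: unmarked_def shift_closed)

lemma marked_Suc: "y_inv \<otimes>\<^bsub>K\<^esub> marked n = marked (Suc n)"
  by (simp add: marked_def shift_mult_lamp_at s_closed algebra_simps)

lemma unmarked_Suc: "y_inv \<otimes>\<^bsub>K\<^esub> unmarked n = unmarked (Suc n)"
  by (simp add: unmarked_def shift_mult algebra_simps)

text \<open>Left multiplication by \<open>lamp_at 0 c (-1)\<close> moves the cursor one step left, which doubles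
  the weight, and changes only the lamp at \<open>0\<close>, which matters only next to the cursor. Since a
  bump at \<open>\<pi>\<close> contributes \<open>2 w \<pi> - w (z \<pi>)\<close>, this bounds the effect of a letter of \<open>T\<close>.\<close>

definition dyadic_weight :: "'c lamplighter_elem \<Rightarrow> int" where
  "dyadic_weight k = (if snd k \<le> -1 \<and> fst k (snd k + 1) = inv\<^bsub>C\<^esub> s then 2 ^ nat (- snd k) else 0)"

lemma dyadic_weight_marked: "dyadic_weight (marked n) = 2 ^ (n + 1)"
proof -
  have "nat (int n + 1) = n + 1" "nat (1 + int n) = Suc n" by simp_all
  then show ?thesis by (simp add: dyadic_weight_def marked_def lamp_at_def)
qed

lemma dyadic_weight_unmarked: "s \<noteq> \<one>\<^bsub>C\<^esub> \<Longrightarrow> dyadic_weight (unmarked n) = 0"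
  using C.inv_eq_1_iff[OF s_closed] by (auto simp: dyadic_weight_def unmarked_def shift_def)

lemma dyadic_weight_step:
  assumes k: "k \<in> carrier K" and c: "c \<in> carrier C"
  shows "\<bar>2 * dyadic_weight k - dyadic_weight (lamp_at 0 c (-1) \<otimes>\<^bsub>K\<^esub> k)\<bar> \<le> 2"
proof -
  obtain f m where km: "k = (f,m)" by fastforce
  have f: "f (m + 1) \<in> carrier C" using k km by (auto simp: K_carrier_iff)
  have step: "lamp_at 0 c (-1) \<otimes>\<^bsub>K\<^esub> (f,m) = ((\<lambda>v. (if v = 0 then c else \<one>\<^bsub>C\<^esub>) \<otimes>\<^bsub>C\<^esub> f (v + 1)), m - 1)"
    by (simp add: lamp_at_def K_mult)
  have dk: "dyadic_weight k = (if m \<le> -1 \<and> f (m + 1) = inv\<^bsub>C\<^esub> s then 2 ^ nat (- m) else 0)"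
    by (simp add: km dyadic_weight_def)
  have dck: "dyadic_weight (lamp_at 0 c (-1) \<otimes>\<^bsub>K\<^esub> k) = (if m \<le> 0 \<and>
      (if m = 0 then c else \<one>\<^bsub>C\<^esub>) \<otimes>\<^bsub>C\<^esub> f (m + 1) = inv\<^bsub>C\<^esub> s then 2 ^ nat (1 - m) else 0)"
    by (simp add: km step dyadic_weight_def)
  consider "m \<le> -1" | "m = 0" | "m \<ge> 1" by linarith
  then show ?thesis
  proof cases
    case 1
    then have "nat (1 - m) = Suc (nat (- m))"
      "(if m = 0 then c else \<one>\<^bsub>C\<^esub>) \<otimes>\<^bsub>C\<^esub> f (m + 1) = f (m + 1)"
      using f by simp_all
    then show ?thesis using 1 by (simp add: dk dck)
  qed (simp_all add: dk dck)
qed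

definition T_gens :: "'c lamplighter_elem int_wreath_elem set" where
  "T_gens = {top (tK \<otimes>\<^bsub>K\<^esub> sK), top tK, bump (inv\<^bsub>K\<^esub> (tK \<otimes>\<^bsub>K\<^esub> sK)), bump (inv\<^bsub>K\<^esub> tK)}"

lemma T_letters:
  "T_gens \<union> m_inv G ` T_gens = {top (tK \<otimes>\<^bsub>K\<^esub> sK), top tK, top x_inv, top y_inv,
     bump x_inv, bump y_inv, inv\<^bsub>G\<^esub> (bump x_inv), inv\<^bsub>G\<^esub> (bump y_inv)}"
  using tK_closed sK_closed inv_tK_sK inv_tK by (auto simp: T_gens_def inv_top)

lemma T_letters_closed: "T_gens \<union> m_inv G ` T_gens \<subseteq> carrier G"
  unfolding T_letters using tK_closed sK_closed shift_closed lamp_at_closed[OF C.inv_closed[OF s_closed]]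
  by (auto simp: top_closed bump_closed G_inv_closed)

lemma T_letter_weight_le:
  assumes g: "g \<in> T_gens \<union> m_inv G ` T_gens" and \<pi>: "\<pi> \<in> carrier K"
  shows "\<bar>weight dyadic_weight (\<lambda>v. fst g (v \<otimes>\<^bsub>K\<^esub> inv\<^bsub>K\<^esub> \<pi>))\<bar> \<le> 2"
proof -
  have bump_le: "\<bar>weight dyadic_weight (\<lambda>v. fst (bump z) (v \<otimes>\<^bsub>K\<^esub> inv\<^bsub>K\<^esub> \<pi>))\<bar> \<le> 2"
    "\<bar>weight dyadic_weight (\<lambda>v. fst (inv\<^bsub>G\<^esub> (bump z)) (v \<otimes>\<^bsub>K\<^esub> inv\<^bsub>K\<^esub> \<pi>))\<bar> \<le> 2"
    if "z = lamp_at 0 c (-1)" "c \<in> carrier C" for z c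
    using dyadic_weight_step[OF \<pi> that(2)] weight_translate_bump[OF _ \<pi>, of z] lamp_at_closed[OF that(2)] that(1)
    by (simp_all add: abs_minus_commute)
  show ?thesis
    using g \<pi> bump_le[OF refl C.inv_closed[OF s_closed]] bump_le[OF shift_eq_lamp_at C.one_closed]
    unfolding T_letters by (auto simp: weight_translate_top)
qed

definition dipole :: "nat \<Rightarrow> 'c lamplighter_elem int_wreath_elem" where
  "dipole n = base (\<lambda>v. (if v = marked n then 1 else 0) + (if v = unmarked n then -1 else 0))"

definition x_path :: "nat \<Rightarrow> 'c lamplighter_elem int_wreath_elem list" where
  "x_path n = top x_inv # replicate n (top y_inv)"

definition y_path :: "nat \<Rightarrow> 'c lamplighter_elem int_wreath_elem list" where
  "y_path n = replicate (Suc n) (top y_inv)"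

definition s_path :: "nat \<Rightarrow> 'c lamplighter_elem int_wreath_elem list" where
  "s_path n = top y_inv # top (inv\<^bsub>K\<^esub> sK) # replicate n (top y_inv)"

lemma rev_path_Suc:
  "rev (x_path (Suc n)) = top y_inv # rev (x_path n)"
  "rev (y_path (Suc n)) = top y_inv # rev (y_path n)"
  "rev (s_path (Suc n)) = top y_inv # rev (s_path n)"
  by (simp_all add: x_path_def y_path_def s_path_def replicate_append_same)

lemma word_top_rev_path:
  "word_top (rev (x_path n)) = marked n"
  "word_top (rev (y_path n)) = unmarked n"
  "word_top (rev (s_path n)) = marked n"
proof (induction n)
  case 0
  show "word_top (rev (x_path 0)) = marked 0"
    using x_inv_closed by (simp add: x_path_def top_eq marked_def)
  show "word_top (rev (y_path 0)) = unmarked 0"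
    using shift_closed by (simp add: y_path_def top_eq unmarked_def)
  show "word_top (rev (s_path 0)) = marked 0"
    using shift_closed sK_closed inv_sK_inv_tK inv_tK by (simp add: s_path_def top_eq marked_def K.m_assoc)
next
  case (Suc n)
  then show "word_top (rev (x_path (Suc n))) = marked (Suc n)"
    "word_top (rev (y_path (Suc n))) = unmarked (Suc n)"
    "word_top (rev (s_path (Suc n))) = marked (Suc n)"
    by (simp_all add: rev_path_Suc top_eq marked_Suc unmarked_Suc)
qed

lemma path_top_words:
  "set (x_path n) \<subseteq> top ` carrier K" "set (y_path n) \<subseteq> top ` carrier K" "set (s_path n) \<subseteq> top ` carrier K"
  using x_inv_closed shift_closed sK_closed by (auto simp: x_path_def y_path_def s_path_def)

lemma loop_bump: "loop [bump z]" "loop [inv\<^bsub>G\<^esub> (bump z)]"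
  unfolding inv_bump unfolding bump_def by (rule loop_base[OF finite_support_two_points])+

lemma loop_lamp: "loop [lamp]" "loop [inv\<^bsub>G\<^esub> lamp]"
  unfolding inv_lamp unfolding lamp_eq by (rule loop_base, rule finite_subset[of _ "{\<one>\<^bsub>K\<^esub>}"], auto)+

fun T_word :: "nat \<Rightarrow> 'c lamplighter_elem int_wreath_elem list" where
  "T_word 0 = [inv\<^bsub>G\<^esub> (bump x_inv), bump y_inv]"
| "T_word (Suc n) = T_word n @ T_word n
     @ conj_word (x_path n) [inv\<^bsub>G\<^esub> (bump y_inv)] @ conj_word (y_path n) [bump y_inv]"

lemma loop_T_word: "loop (T_word n)"
proof (induction n)
  case 0
  show ?case using loop_append[OF loop_bump(2) loop_bump(1)] by simp
next
  case (Suc n)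
  then show ?case using loop_conj_word path_top_words loop_bump by (simp add: loop_append)
qed

lemma word_base_T_word:
  "v \<in> carrier K \<Longrightarrow>
    word_base (T_word n) v = (if v = marked n then 1 else 0) + (if v = unmarked n then -1 else 0)"
proof (induction n)
  case 0
  have "word_base (T_word 0) v = fst (inv\<^bsub>G\<^esub> (bump x_inv)) v + fst (bump y_inv) v"
    using word_base_append_loop[OF loop_bump(2) 0, where ys = "[bump y_inv]"] 0 by simp
  then show ?case
    using fst_bump_translate[OF _ K.one_closed 0] x_inv_closed shift_closed 0
    by (simp add: marked_def unmarked_def)
next
  case (Suc n)
  let ?A = "conj_word (x_path n) [inv\<^bsub>G\<^esub> (bump y_inv)]"
  have A: "loop ?A" using loop_conj_word path_top_words loop_bump by blast
  have "word_base (T_word (Suc n)) v = 2 * word_base (T_word n) v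
      + fst (inv\<^bsub>G\<^esub> (bump y_inv)) (v \<otimes>\<^bsub>K\<^esub> inv\<^bsub>K\<^esub> marked n) + fst (bump y_inv) (v \<otimes>\<^bsub>K\<^esub> inv\<^bsub>K\<^esub> unmarked n)"
    using loop_T_word A Suc.prems
    by (simp add: word_base_append_loop loop_append word_top_rev_path
        word_base_conj_word[OF path_top_words(1) loop_bump(2)] word_base_conj_word[OF path_top_words(2) loop_bump(1)])
  then show ?case
    using Suc fst_bump_translate[OF shift_closed _ Suc.prems] marked_closed unmarked_closed
    by (simp add: marked_Suc unmarked_Suc)
qed
definition S_word :: "nat \<Rightarrow> 'c lamplighter_elem int_wreath_elem list" where
  "S_word n = conj_word (s_path n) [lamp] @ conj_word (y_path n) [inv\<^bsub>G\<^esub> lamp]"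

lemma S_word:
  "loop (S_word n)"
  "v \<in> carrier K \<Longrightarrow>
     word_base (S_word n) v = (if v = marked n then 1 else 0) + (if v = unmarked n then -1 else 0)"
  "length (S_word n) = 4 * n + 8"
proof -
  have A: "loop (conj_word (s_path n) [lamp])" and B: "loop (conj_word (y_path n) [inv\<^bsub>G\<^esub> lamp])"
    using loop_conj_word path_top_words loop_lamp by blast+
  then show "loop (S_word n)" by (simp add: S_word_def loop_append)
  assume v: "v \<in> carrier K"
  have in_K: "v \<otimes>\<^bsub>K\<^esub> inv\<^bsub>K\<^esub> marked n \<in> carrier K" "v \<otimes>\<^bsub>K\<^esub> inv\<^bsub>K\<^esub> unmarked n \<in> carrier K"
    using v marked_closed unmarked_closed by simp_all
  have "word_base (S_word n) v
      = word_base [lamp] (v \<otimes>\<^bsub>K\<^esub> inv\<^bsub>K\<^esub> marked n) + word_base [inv\<^bsub>G\<^esub> lamp] (v \<otimes>\<^bsub>K\<^esub> inv\<^bsub>K\<^esub> unmarked n)"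
    using A v by (simp add: S_word_def word_base_append_loop word_top_rev_path
        word_base_conj_word[OF path_top_words(3) loop_lamp(1)] word_base_conj_word[OF path_top_words(2) loop_lamp(2)])
  also have "\<dots> = (if v = marked n then 1 else 0) + (if v = unmarked n then -1 else 0)"
    unfolding inv_lamp unfolding lamp_eq using in_K v marked_closed unmarked_closed
    by (simp add: fst_base K.inv_solve_right')
  finally show "word_base (S_word n) v = (if v = marked n then 1 else 0) + (if v = unmarked n then -1 else 0)" .
next
  show "length (S_word n) = 4 * n + 8"
    by (simp add: S_word_def conj_word_def inv_word_def s_path_def y_path_def)
qed

lemma shift_in_generate: "shift m \<in> generate K {sK, tK}"
proof -
  define H where "H = generate K {sK, tK}"
  have H: "subgroup H K"
    unfolding H_def using K.generate_is_subgroup sK_closed tK_closed by simp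
  have "tK \<in> H" "inv\<^bsub>K\<^esub> tK \<in> H" unfolding H_def by (simp_all add: generate.incl generate.inv)
  then have t: "shift 1 \<in> H" "y_inv \<in> H" by (simp_all add: tK_eq inv_tK[unfolded tK_eq])
  have "shift (int n) \<in> H \<and> shift (- int n) \<in> H" for n
  proof (induction n)
    case 0
    show ?case using subgroup.one_closed[OF H] by (simp add: K_one shift_def)
  next
    case (Suc n)
    have "shift (int (Suc n)) = shift 1 \<otimes>\<^bsub>K\<^esub> shift (int n)"
      "shift (- int (Suc n)) = y_inv \<otimes>\<^bsub>K\<^esub> shift (- int n)"
      by (simp_all add: shift_mult)
    then show ?case
      using Suc.IH subgroup.m_closed[OF H t(1)] subgroup.m_closed[OF H t(2)] by simp
  qed
  then show ?thesis unfolding H_def[symmetric] by (cases m rule: int_cases2) auto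
qed

lemma lamp_at_in_generate:
  assumes "c \<in> generate C {s}"
  shows "lamp_at j c m \<in> generate K {sK, tK}"
proof -
  define H where "H = generate K {sK, tK}"
  have H: "subgroup H K"
    unfolding H_def using K.generate_is_subgroup sK_closed tK_closed by simp
  have sK: "sK \<in> H" "inv\<^bsub>K\<^esub> sK \<in> H" unfolding H_def by (simp_all add: generate.incl generate.inv)
  have c: "c \<in> carrier C" using assms C.generate_in_carrier[of "{s}"] s_closed by auto
  have "lamp_at 0 c 0 \<in> H"
    using assms
  proof (induction c rule: generate.induct)
    case one
    show ?case using shift_in_generate[of 0] by (simp add: H_def shift_eq_lamp_at[of _ 0])
  next
    case (incl h)
    then show ?case using sK(1) by (simp add: sK_eq)
  next
    case (inv h)
    then have "inv\<^bsub>K\<^esub> sK = lamp_at 0 (inv\<^bsub>C\<^esub> h) 0" using lamp_at_closed[OF s_closed]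
      by (auto simp: sK_eq K_inv lamp_at_def)
    then show ?case using sK(2) by simp
  next
    case (eng c\<^sub>1 c\<^sub>2)
    have "c\<^sub>1 \<in> carrier C" "c\<^sub>2 \<in> carrier C"
      using eng.hyps C.generate_in_carrier[of "{s}"] s_closed by auto
    then have "lamp_at 0 (c\<^sub>1 \<otimes>\<^bsub>C\<^esub> c\<^sub>2) 0 = lamp_at 0 c\<^sub>1 0 \<otimes>\<^bsub>K\<^esub> lamp_at 0 c\<^sub>2 0"
      by (auto simp: lamp_at_def K_mult)
    then show ?case using subgroup.m_closed[OF H eng.IH] by simp
  qed
  moreover have "lamp_at j c m = shift j \<otimes>\<^bsub>K\<^esub> lamp_at 0 c 0 \<otimes>\<^bsub>K\<^esub> shift (m - j)"
    using c by (auto simp: lamp_at_def shift_def K_mult)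
  ultimately show ?thesis
    using subgroup.m_closed[OF H] shift_in_generate unfolding H_def by metis
qed

lemma generate_sK_tK:
  assumes gen: "generate C {s} = carrier C"
  shows "generate K {sK, tK} = carrier K"
proof
  define H where "H = generate K {sK, tK}"
  have H: "subgroup H K"
    unfolding H_def using K.generate_is_subgroup sK_closed tK_closed by simp
  then show "generate K {sK, tK} \<subseteq> carrier K" unfolding H_def by (rule subgroup.subset)
  have "(f, m) \<in> H" if "finite P" "{v. f v \<noteq> \<one>\<^bsub>C\<^esub>} \<subseteq> P" "\<forall>v. f v \<in> carrier C" for P f m
    using that
  proof (induction P arbitrary: f)
    case empty
    then have "f = (\<lambda>v. \<one>\<^bsub>C\<^esub>)" by auto
    then show ?case using shift_in_generate[of m] by (simp add: shift_def H_def)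
  next
    case (insert j P)
    have "(f(j := \<one>\<^bsub>C\<^esub>), m) \<in> H"
      using insert.prems by (intro insert.IH) auto
    moreover have "(f, m) = lamp_at j (f j) 0 \<otimes>\<^bsub>K\<^esub> (f(j := \<one>\<^bsub>C\<^esub>), m)"
      using insert.prems by (auto simp: lamp_at_def K_mult)
    moreover have "lamp_at j (f j) 0 \<in> H"
      unfolding H_def using lamp_at_in_generate insert.prems gen by simp
    ultimately show ?case using subgroup.m_closed[OF H] by simp
  qed
  then show "carrier K \<subseteq> generate K {sK, tK}"
    unfolding H_def[symmetric] by (auto simp: K_carrier_iff Pi_def)
qed

lemma word_prod_T_word: "word_prod G (T_word n) = dipole n"
  using loop_T_word by (simp add: word_prod_loop dipole_def word_base_T_word cong: base_cong)

lemma word_prod_S_word: "word_prod G (S_word n) = dipole n"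
  using S_word(1)[of n] by (simp add: word_prod_loop dipole_def S_word(2) cong: base_cong)

lemma T_word_letters: "set (T_word n) \<subseteq> T_gens \<union> m_inv G ` T_gens"
proof (induction n)
  case 0
  show ?case unfolding T_letters by simp
next
  case (Suc n)
  have "inv\<^bsub>G\<^esub> (top x_inv) = top (tK \<otimes>\<^bsub>K\<^esub> sK)" "inv\<^bsub>G\<^esub> (top y_inv) = top tK"
    using x_inv_closed shift_closed tK_closed sK_closed
    by (simp_all add: inv_top inv_tK_sK[symmetric] inv_tK[symmetric])
  then have "set (x_path n) \<union> m_inv G ` set (x_path n) \<subseteq> T_gens \<union> m_inv G ` T_gens"
    "set (y_path n) \<union> m_inv G ` set (y_path n) \<subseteq> T_gens \<union> m_inv G ` T_gens"
    unfolding T_letters by (auto simp: x_path_def y_path_def)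
  then show ?case
    using Suc.IH unfolding T_letters by (auto simp: set_conj_word)
qed

definition S_gens :: "'c lamplighter_elem int_wreath_elem set" where
  "S_gens = {lamp, top sK, top tK}"

lemma S_letters: "S_gens \<union> m_inv G ` S_gens = top ` ({sK, tK} \<union> m_inv K ` {sK, tK}) \<union> {lamp, inv\<^bsub>G\<^esub> lamp}"
  using sK_closed tK_closed by (auto simp: S_gens_def inv_top)

lemma S_word_letters: "set (S_word n) \<subseteq> S_gens \<union> m_inv G ` S_gens"
  unfolding S_letters using sK_closed tK_closed
  by (auto simp: S_word_def set_conj_word s_path_def y_path_def inv_top inv_tK[symmetric])

lemma S_words_cover:
  assumes gen: "generate C {s} = carrier C" and g: "g \<in> carrier G"
  shows "\<exists>xs. set xs \<subseteq> S_gens \<union> m_inv G ` S_gens \<and> word_prod G xs = g"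
proof -
  let ?B = "{sK, tK} \<union> m_inv K ` {sK, tK}"
  have B: "?B \<subseteq> carrier K" "m_inv K ` ?B \<subseteq> ?B" using sK_closed tK_closed by auto
  have "\<exists>u. set u \<subseteq> top ` ?B \<and> word_top u = k" if "k \<in> carrier K" for k
    using top_word_of_generate[of "{sK, tK}" k] generate_sK_tK[OF gen] that sK_closed tK_closed by auto
  then show ?thesis using word_of_carrier[OF B _ g] unfolding S_letters by blast
qed

lemma T_length_dipole_ge:
  assumes "s \<noteq> \<one>\<^bsub>C\<^esub>"
  shows "2 ^ n \<le> word_length G T_gens (dipole n)"
proof -
  obtain xs where xs: "length xs = word_length G T_gens (dipole n)" "set xs \<subseteq> T_gens \<union> m_inv G ` T_gens"
    "word_prod G xs = dipole n"
    using word_length_attained[OF T_word_letters word_prod_T_word] by blast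
  have "set xs \<subseteq> carrier G" using xs(2) T_letters_closed by blast
  then have "fst (word_prod G xs) v = word_base xs v" if "v \<in> carrier K" for v
    using that by (simp add: word_prod_eq)
  then have wb: "word_base xs v = (if v = marked n then 1 else 0) + (if v = unmarked n then -1 else 0)"
    if "v \<in> carrier K" for v
    using that xs(3) by (simp add: dipole_def fst_base)
  have "weight dyadic_weight (\<lambda>v. word_base xs (v \<otimes>\<^bsub>K\<^esub> inv\<^bsub>K\<^esub> \<one>\<^bsub>K\<^esub>))
      = weight dyadic_weight (\<lambda>v. (if v = marked n then 1 else 0) + (if v = unmarked n then -1 else 0))"
    by (rule weight_cong) (simp add: wb)
  also have "\<dots> = 1 * dyadic_weight (marked n) + (-1) * dyadic_weight (unmarked n)"
    by (rule weight_two_points[OF marked_closed unmarked_closed])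
  also have "\<dots> = 2 * 2 ^ n"
    by (simp add: dyadic_weight_marked dyadic_weight_unmarked[OF assms])
  finally have "2 * 2 ^ n \<le> 2 * int (length xs)"
    using weight_word_base_le[OF T_letter_weight_le T_letters_closed xs(2) K.one_closed] by simp
  then have "(2::int) ^ n \<le> int (length xs)" by simp
  then show ?thesis using xs(1) by (metis of_nat_le_iff of_nat_numeral of_nat_power)
qed

lemma two_pow_le_distortion:
  assumes gen: "generate C {s} = carrier C" and s: "s \<noteq> \<one>\<^bsub>C\<^esub>" and N: "4 * n + 8 \<le> N"
  shows "2 ^ n \<le> distortion G S_gens T_gens N"
proof -
  have "generate G T_gens \<subseteq> carrier G"
    using T_letters_closed by (intro generate_subset_carrier) auto
  then have "\<exists>xs. set xs \<subseteq> S_gens \<union> m_inv G ` S_gens \<and> word_prod G xs = h" if "h \<in> generate G T_gens" for h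
    using S_words_cover[OF gen] that by blast
  moreover have "dipole n \<in> generate G T_gens"
    using word_prod_in_generate[OF T_word_letters] by (simp add: word_prod_T_word)
  moreover have "word_length G S_gens (dipole n) \<le> 4 * n + 8"
    using word_length_le[OF S_word_letters word_prod_S_word] S_word(3) by simp
  then have "word_length G S_gens (dipole n) \<le> N" using N by linarith
  ultimately have "word_length G T_gens (dipole n) \<le> distortion G S_gens T_gens N"
    by (intro word_length_le_distortion) (auto simp: S_gens_def)
  then show ?thesis using T_length_dipole_ge[OF s, of n] by linarith
qed

end

theorem mainTheorem7:
  fixes C :: "('c,'z) monoid_scheme" and s :: 'c
  assumes "group C" and "finite (carrier C)" and "s \<in> carrier C"
    and "generate C {s} = carrier C" and "carrier C \<noteq> {\<one>\<^bsub>C\<^esub>}"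
  defines "K \<equiv> wreath C integer_group"
    and "G \<equiv> wreath integer_group (wreath C integer_group)"
  defines "a \<equiv> wr_base integer_group K (1::int)"
    and "sG \<equiv> wr_top integer_group K (wr_base C integer_group s)"
    and "tG \<equiv> wr_top integer_group K (wr_top C integer_group (1::int))"
  defines "x \<equiv> tG \<otimes>\<^bsub>G\<^esub> sG" and "y \<equiv> tG"
  shows "dominated (\<lambda>n. 2 ^ n)
           (\<lambda>n. real (distortion G {a, sG, tG}
                  {x, y, commutator G x a \<otimes>\<^bsub>G\<^esub> a, commutator G y a \<otimes>\<^bsub>G\<^esub> a} n))"
proof -
  interpret lamplighter C s by (rule lamplighter.intro) fact+
  have s: "s \<noteq> \<one>\<^bsub>C\<^esub>"
  proof
    assume "s = \<one>\<^bsub>C\<^esub>"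
    then show False using assms(4,5) C.generate_one by simp
  qed
  have "{x, y, commutator G x a \<otimes>\<^bsub>G\<^esub> a, commutator G y a \<otimes>\<^bsub>G\<^esub> a} = T_gens"
    unfolding x_def y_def tG_def sG_def a_def G_def K_def T_gens_def
    using tK_closed sK_closed by (simp add: top_mult commutator_top_lamp)
  moreover have "{a, sG, tG} = S_gens"
    unfolding a_def sG_def tG_def K_def S_gens_def ..
  moreover have "2 ^ n \<le> distortion G S_gens T_gens (8 * n + 8)" for n
    unfolding G_def by (rule two_pow_le_distortion[OF assms(4) s]) simp
  ultimately show ?thesis
    by (intro dominated_by_rescaling[where C = 8]) simp_all
qed

end
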